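(* Let $p$ be a prime, $A$ a torsion-free $\mathbb{Z}_{(p)}$-algebra, $\mathfrak a\subseteq A$ a divided-power ideal, $P,Q\in A[X]$ monic, and $N\ge1$. If $p_n(P)\equiv p_n(Q)\pmod{n\mathfrak a}$ for all $1\le n\le N$, then $e_n(P)\equiv e_n(Q)\pmod{\mathfrak a}$ for all $1\le n\le N$.
   Context: An ideal $\mathfrak a$ of a torsion-free $\mathbb{Z}_{(p)}$-algebra $A$ is a divided-power ideal if $a^p\in p\,\mathfrak a$ for all $a\in\mathfrak a$ (equivalently $a^k/k!\in\mathfrak a$ in $A\otimes\mathbb{Q}$ for all $a\in\mathfrak a$, $k\ge1$). For a monic $P=X^d+a_1X^{d-1}+\dots+a_d\in A[X]$: $e_0(P)=1$, $e_n(P)=(-1)^na_n$ for $1\le n\le d$, $e_n(P)=0$ for $n>d$; and $p_n(P)$ for $n\ge1$ is defined by Newton's identities $p_n(P)=\sum_{i=1}^{n-1}(-1)^{i-1}e_i(P)p_{n-i}(P)+(-1)^{n-1}n\,e_n(P)$ (for $A$ a domain, the $n$-th power sum of the roots of $P$ with multiplicity). $n\mathfrak a=\{na:a\in\mathfrak a\}$. *)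

theory Defs
  imports "HOL-Computational_Algebra.Polynomial"
begin

definition is_ideal :: "'a::comm_ring_1 set \<Rightarrow> bool" where
  "is_ideal I \<longleftrightarrow> 0 \<in> I \<and> (\<forall>x\<in>I. \<forall>y\<in>I. x + y \<in> I) \<and> (\<forall>r. \<forall>x\<in>I. r * x \<in> I)"

definition nat_smul_set :: "nat \<Rightarrow> 'a::comm_ring_1 set \<Rightarrow> 'a set" where
  "nat_smul_set n I = {of_nat n * a | a. a \<in> I}"

definition zp_algebra :: "nat \<Rightarrow> 'a::comm_ring_1 itself \<Rightarrow> bool" where
  "zp_algebra p _ \<longleftrightarrow> (\<forall>m::nat. \<not> p dvd m \<longrightarrow> (\<exists>y::'a. of_nat m * y = 1))"

definition torsion_free :: "'a::comm_ring_1 itself \<Rightarrow> bool" where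
  "torsion_free _ \<longleftrightarrow> (\<forall>(m::nat) (x::'a). m \<noteq> 0 \<longrightarrow> of_nat m * x = 0 \<longrightarrow> x = 0)"

definition divided_power_ideal :: "nat \<Rightarrow> 'a::comm_ring_1 set \<Rightarrow> bool" where
  "divided_power_ideal p I \<longleftrightarrow> is_ideal I \<and> (\<forall>a\<in>I. a ^ p \<in> nat_smul_set p I)"

text \<open>e_n(P) for P = X^d + a_1 X^(d-1) + ... + a_d, with a_n = coeff P (d - n).\<close>
definition esym :: "'a::comm_ring_1 poly \<Rightarrow> nat \<Rightarrow> 'a" where
  "esym P n = (if n = 0 then 1 else if n \<le> degree P then (-1) ^ n * coeff P (degree P - n) else 0)"

text \<open>List [p_1(P), ..., p_n(P)] defined by Newton's identities.\<close>
fun psums :: "'a::comm_ring_1 poly \<Rightarrow> nat \<Rightarrow> 'a list" where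
  "psums P 0 = []"
| "psums P (Suc n) = (let ps = psums P n; m = Suc n in
     ps @ [(\<Sum>i=1..<m. (-1) ^ (i - 1) * esym P i * ps ! (m - i - 1))
           + (-1) ^ (m - 1) * of_nat m * esym P m])"

definition psum :: "'a::comm_ring_1 poly \<Rightarrow> nat \<Rightarrow> 'a" where
  "psum P n = psums P n ! (n - 1)"

end

theory Submission
  imports Defs "HOL-Computational_Algebra.Formal_Power_Series"
begin

text \<open>
Work with the generating series \<open>E_P(t) = \<Sum> e_n(P) t\<^sup>n\<close> and the Euler operator \<open>D = t d/dt\<close>.
Newton's identities say \<open>D E_P = E_P S_P\<close> with \<open>S_P = \<Sum> (-1)\<^sup>n\<^sup>-\<^sup>1 p_n(P) t\<^sup>n\<close>, so the quotient
\<open>F = E_P / E_Q\<close> satisfies \<open>D F = F (S_P - S_Q)\<close>. By hypothesis \<open>S_P - S_Q \<equiv> \<Sum> n b\<^sub>n t\<^sup>n\<close> modulo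
\<open>t\<^sup>N\<^sup>+\<^sup>1\<close> with \<open>b\<^sub>n \<in> \<aa>\<close>, and the product \<open>G\<close> of the divided-power exponentials \<open>exp(b\<^sub>n t\<^sup>n)\<close>
solves the same equation with the same constant term. Torsion-freeness makes the solution unique
modulo \<open>t\<^sup>N\<^sup>+\<^sup>1\<close>, so \<open>F \<equiv> G\<close>; since \<open>\<aa>\<close> has divided powers, \<open>G \<equiv> 1\<close> coefficientwise modulo \<open>\<aa>\<close>,
hence \<open>E_P = E_Q F \<equiv> E_Q\<close> in degrees \<open>\<le> N\<close>.
\<close>

lemma fact_prime_decomp:
  fixes p :: nat assumes "prime p"
  shows "\<exists>r. fact n = p ^ (n div p) * fact (n div p) * r \<and> \<not> p dvd r"
proof (induction n)
  case 0 then show ?case by (intro exI[of _ 1]) (use assms in \<open>auto simp: prime_gt_1_nat\<close>)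
next
  case (Suc n)
  then obtain r where r: "fact n = p ^ (n div p) * fact (n div p) * r" "\<not> p dvd r" by blast
  have p2: "p \<ge> 2" using assms prime_ge_2_nat by blast
  show ?case
  proof (cases "p dvd Suc n")
    case True
    then obtain q where q: "Suc n = p * Suc q"
      by (metis dvd_def mult_0_right nat.distinct(1) not0_implies_Suc)
    have "n = (p - 1) + q * p" using q p2 by (simp add: algebra_simps)
    then have nd: "n div p = q" using p2 by (simp only:) (subst div_mult_self1, auto)
    have "fact (Suc n) = Suc n * fact n" by simp
    also have "\<dots> = p * Suc q * (p ^ q * fact q * r)" using q r nd by simp
    also have "\<dots> = p ^ Suc q * fact (Suc q) * r" by (simp add: algebra_simps)
    finally show ?thesis using q p2 r(2) by auto
  next
    case False
    have "Suc n div p = n div p" using False by (auto simp: div_Suc dvd_eq_mod_eq_0)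
    moreover have "\<not> p dvd (Suc n * r)" using False r(2) assms prime_dvd_mult_iff by blast
    moreover have "fact (Suc n) = p ^ (n div p) * fact (n div p) * (Suc n * r)"
      using r by (simp add: algebra_simps)
    ultimately show ?thesis by metis
  qed
qed

lemma is_ideal_mult_left: "is_ideal I \<Longrightarrow> x \<in> I \<Longrightarrow> r * x \<in> I"
  unfolding is_ideal_def by blast

lemma is_ideal_mult_right: "is_ideal I \<Longrightarrow> x \<in> I \<Longrightarrow> x * r \<in> I"
  unfolding is_ideal_def by (metis mult.commute)

lemma is_ideal_zero: "is_ideal I \<Longrightarrow> 0 \<in> I"
  unfolding is_ideal_def by blast

lemma is_ideal_sum: "is_ideal I \<Longrightarrow> (\<And>i. i \<in> A \<Longrightarrow> f i \<in> I) \<Longrightarrow> sum f A \<in> I"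
  by (induction A rule: infinite_finite_induct) (auto simp: is_ideal_def)

lemma divided_power_ideal_is_ideal: "divided_power_ideal p I \<Longrightarrow> is_ideal I"
  unfolding divided_power_ideal_def by blast

section \<open>Divided powers\<close>

lemma divided_power_exists:
  fixes I :: "'a::comm_ring_1 set"
  assumes pr: "prime p" and zp: "zp_algebra p TYPE('a)" and dp: "divided_power_ideal p I"
  shows "k \<ge> 1 \<Longrightarrow> b \<in> I \<Longrightarrow> \<exists>y\<in>I. of_nat (fact k) * y = b ^ k"
proof (induction k arbitrary: b rule: less_induct)
  case (less k)
  have id: "is_ideal I" using dp by (rule divided_power_ideal_is_ideal)
  show ?case
  proof (cases "p dvd k")
    case False
    then obtain u :: 'a where u: "of_nat k * u = 1" using zp unfolding zp_algebra_def by blast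
    show ?thesis
    proof (cases "k = 1")
      case True then show ?thesis using less.prems by auto
    next
      case False
      then obtain y where y: "y \<in> I" "of_nat (fact (k - 1)) * y = b ^ (k - 1)"
        using less.IH[of "k - 1" b] less.prems by fastforce
      have k: "k = Suc (k - 1)" using less.prems by simp
      have "(fact k :: nat) = k * fact (k - 1)" using fact_reduce[of k, where 'a=nat] k by simp
      then have "of_nat (fact k) * (u * b * y) = (of_nat k * u) * b * (of_nat (fact (k - 1)) * y)"
        by (simp add: algebra_simps)
      also have "\<dots> = b ^ k" using u y k by (metis mult_1 power_Suc)
      finally show ?thesis using is_ideal_mult_left[OF id y(1)] by (metis mult.assoc)
    qed
  next
    case True
    then obtain m where m: "k = p * m" by blast
    have m1: "m \<ge> 1" using m less.prems by (cases m) auto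
    have mk: "m < k" using m m1 prime_ge_2_nat[OF pr] by simp
    text \<open>\<open>b\<^sup>p = p c\<close> with \<open>c \<in> I\<close>, and \<open>(pm)! = p\<^sup>m m! r\<close> with \<open>r\<close> a unit, so \<open>b\<^sup>p\<^sup>m / (pm)! = c\<^sup>m / (m! r)\<close>.\<close>
    obtain c where c: "c \<in> I" "b ^ p = of_nat p * c"
      using dp less.prems unfolding divided_power_ideal_def nat_smul_set_def by blast
    obtain z where z: "z \<in> I" "of_nat (fact m) * z = c ^ m" using less.IH[OF mk m1 c(1)] by blast
    obtain r where r: "fact (p * m) = p ^ m * fact m * r" "\<not> p dvd r"
      using fact_prime_decomp[OF pr, of "p * m"] prime_gt_0_nat[OF pr] by auto
    obtain u :: 'a where u: "of_nat r * u = 1" using zp r(2) unfolding zp_algebra_def by blast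
    have "of_nat (fact k) * (u * z) = of_nat p ^ m * (of_nat (fact m) * z) * (of_nat r * u)"
      using m r(1) by (simp add: algebra_simps)
    also have "\<dots> = b ^ k" using z u c m by (simp add: power_mult power_mult_distrib)
    finally show ?thesis using is_ideal_mult_left[OF id z(1)] by blast
  qed
qed

text \<open>\<open>\<gamma>\<^sub>k(b) = b\<^sup>k / k!\<close>; for \<open>b \<notin> I\<close> the value is unspecified.\<close>
definition divided_power :: "'a set \<Rightarrow> nat \<Rightarrow> 'a \<Rightarrow> 'a::comm_ring_1" where
  "divided_power I k b = (if k = 0 then 1 else (SOME y. y \<in> I \<and> of_nat (fact k) * y = b ^ k))"

context
  fixes p :: nat and I :: "'a::comm_ring_1 set"
  assumes pr: "prime p" and zp: "zp_algebra p TYPE('a)" and dp: "divided_power_ideal p I"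
begin

lemma divided_power_in_ideal_and_fact:
  assumes "b \<in> I" "k \<ge> 1"
  shows "divided_power I k b \<in> I \<and> of_nat (fact k) * divided_power I k b = b ^ k"
proof -
  have "\<exists>y. y \<in> I \<and> of_nat (fact k) * y = b ^ k"
    using divided_power_exists[OF pr zp dp assms(2,1)] by blast
  from someI_ex[OF this] show ?thesis using assms(2) by (simp add: divided_power_def)
qed

lemma divided_power_in_ideal: "b \<in> I \<Longrightarrow> k \<ge> 1 \<Longrightarrow> divided_power I k b \<in> I"
  using divided_power_in_ideal_and_fact by blast

lemma fact_mult_divided_power: "b \<in> I \<Longrightarrow> of_nat (fact k) * divided_power I k b = b ^ k"
  using divided_power_in_ideal_and_fact[of b k] by (cases "k = 0") (auto simp: divided_power_def)

lemma of_nat_mult_divided_power: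
  assumes tf: "torsion_free TYPE('a)" and b: "b \<in> I" and k: "k \<ge> 1"
  shows "of_nat k * divided_power I k b = b * divided_power I (k - 1) b"
proof -
  have fk: "(fact k :: nat) = k * fact (k - 1)" using fact_reduce[of k, where 'a=nat] k by simp
  have "of_nat (fact (k - 1)) * (of_nat k * divided_power I k b) = b ^ k"
    using fact_mult_divided_power[OF b, of k] by (simp add: fk algebra_simps)
  also have "\<dots> = b * b ^ (k - 1)" using k by (simp flip: power_Suc)
  also have "\<dots> = of_nat (fact (k - 1)) * (b * divided_power I (k - 1) b)"
    using fact_mult_divided_power[OF b, of "k - 1"] by (simp add: algebra_simps)
  finally have "of_nat (fact (k - 1)) * (of_nat k * divided_power I k b - b * divided_power I (k - 1) b) = 0"
    by (simp add: algebra_simps)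
  then show ?thesis using tf unfolding torsion_free_def by (metis fact_nonzero right_minus_eq)
qed

end

section \<open>The Euler operator on formal power series\<close>

definition fps_euler :: "'a::comm_ring_1 fps \<Rightarrow> 'a fps" where
  "fps_euler F = fps_X * fps_deriv F"

lemma fps_euler_nth [simp]: "fps_nth (fps_euler F) n = of_nat n * fps_nth F n"
  by (cases n) (simp_all add: fps_euler_def fps_X_mult_nth)

lemma fps_euler_mult: "fps_euler (F * G) = fps_euler F * G + F * fps_euler G"
  unfolding fps_euler_def by (simp add: algebra_simps)

lemma fps_euler_prod:
  assumes "finite A" "\<And>i. i \<in> A \<Longrightarrow> fps_euler (X i) = X i * Y i"
  shows "fps_euler (prod X A) = prod X A * sum Y A"
  using assms
proof (induction A rule: finite_induct)
  case empty then show ?case by (simp add: fps_euler_def)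
next
  case (insert a A) then show ?case by (simp add: fps_euler_mult algebra_simps)
qed

lemma fps_euler_ratio:
  assumes A: "fps_euler A = A * S" and B: "fps_euler B = B * T" and BR: "B * R = 1"
  shows "fps_euler (A * R) = (A * R) * (S - T)"
proof -
  have BAR: "B * (A * R) = A" using BR by (metis mult.left_commute mult_1_right)
  have "B * fps_euler (A * R) = fps_euler A - fps_euler B * (A * R)"
    using fps_euler_mult[of B "A * R"] BAR by (simp add: algebra_simps)
  also have "\<dots> = B * (A * R) * (S - T)"
    unfolding A B BAR by (metis BAR mult.assoc mult.commute right_diff_distrib)
  finally have "R * (B * fps_euler (A * R)) = R * (B * ((A * R) * (S - T)))"
    by (simp add: mult.assoc)
  then show ?thesis using BR by (simp add: mult.assoc[symmetric] mult.commute[of R])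
qed

text \<open>Torsion-freeness makes \<open>D H = H T\<close> with \<open>T\<^sub>0 = 0\<close> determine \<open>H\<close> degree by degree from \<open>H\<^sub>0\<close>.\<close>
lemma fps_euler_solutions_agree:
  fixes F G S T :: "'a::comm_ring_1 fps"
  assumes tf: "torsion_free TYPE('a)"
    and F: "fps_euler F = F * S" and G: "fps_euler G = G * T"
    and FG0: "fps_nth F 0 = fps_nth G 0" and T0: "fps_nth T 0 = 0"
    and ST: "\<And>j. j \<le> N \<Longrightarrow> fps_nth S j = fps_nth T j"
  shows "n \<le> N \<Longrightarrow> fps_nth F n = fps_nth G n"
proof (induction n rule: less_induct)
  case (less n)
  show ?case
  proof (cases "n = 0")
    case True then show ?thesis using FG0 by simp
  next
    case False
    have "of_nat n * (fps_nth F n - fps_nth G n) = fps_nth (F * S) n - fps_nth (G * T) n"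
      by (metis F G fps_euler_nth right_diff_distrib)
    also have "fps_nth (F * S) n = fps_nth (F * T) n"
      unfolding fps_mult_nth using ST less.prems by (intro sum.cong) auto
    also have "fps_nth (F * T) n - fps_nth (G * T) n
        = (\<Sum>i=0..n. (fps_nth F i - fps_nth G i) * fps_nth T (n - i))"
      by (simp add: fps_mult_nth algebra_simps sum_subtractf)
    also have "\<dots> = 0"
      using less T0 by (intro sum.neutral) (auto simp: order.order_iff_strict)
    finally show ?thesis
      using tf False unfolding torsion_free_def by (metis right_minus_eq)
  qed
qed

lemma fps_nth_sum_monomials:
  assumes "finite A"
  shows "fps_nth (\<Sum>i\<in>A. fps_const (c i) * fps_X ^ i) j = (if j \<in> A then c j else 0)"
proof -
  have "fps_nth (\<Sum>i\<in>A. fps_const (c i) * fps_X ^ i) j = (\<Sum>i\<in>A. if i = j then c i else 0)"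
    unfolding fps_sum_nth by (intro sum.cong) (auto simp: fps_mult_left_const_nth)
  then show ?thesis using assms by (simp add: sum.delta)
qed

section \<open>Newton's identities as an equation of power series\<close>

definition esym_fps :: "'a::comm_ring_1 poly \<Rightarrow> 'a fps" where
  "esym_fps P = Abs_fps (esym P)"

definition psum_fps :: "'a::comm_ring_1 poly \<Rightarrow> 'a fps" where
  "psum_fps P = Abs_fps (\<lambda>j. if j = 0 then 0 else (-1) ^ (j - 1) * psum P j)"

lemma psums_length: "length (psums P n) = n"
  by (induction n) (simp_all add: Let_def)

lemma psums_nth_prefix: "m \<le> n \<Longrightarrow> k < m \<Longrightarrow> psums P n ! k = psums P m ! k"
proof (induction n)
  case (Suc n)
  then show ?case
    by (cases "m = Suc n") (auto simp: Let_def nth_append psums_length)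
qed simp

lemma psum_Suc:
  "psum P (Suc n) = (\<Sum>i=1..n. (-1) ^ (i - 1) * esym P i * psum P (Suc n - i))
     + (-1) ^ n * of_nat (Suc n) * esym P (Suc n)"
proof -
  have "(\<Sum>i=1..<Suc n. (-1) ^ (i - 1) * esym P i * psums P n ! (Suc n - i - 1))
      = (\<Sum>i=1..n. (-1) ^ (i - 1) * esym P i * psum P (Suc n - i))"
  proof (rule sum.cong)
    fix i assume "i \<in> {1..n}"
    then have "psums P n ! (Suc n - i - 1) = psum P (Suc n - i)"
      unfolding psum_def by (intro psums_nth_prefix) auto
    then show "(-1) ^ (i - 1) * esym P i * psums P n ! (Suc n - i - 1)
        = (-1) ^ (i - 1) * esym P i * psum P (Suc n - i)" by simp
  qed (auto simp: atLeastLessThanSuc_atLeastAtMost)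
  then show ?thesis by (simp add: psum_def Let_def nth_append psums_length)
qed

lemma fps_euler_esym_fps: "fps_euler (esym_fps P) = esym_fps P * psum_fps P"
proof (rule fps_ext)
  fix n
  let ?e = "esym P" and ?p = "psum P"
  show "fps_nth (fps_euler (esym_fps P)) n = fps_nth (esym_fps P * psum_fps P) n"
  proof (cases n)
    case 0 then show ?thesis by (simp add: esym_fps_def psum_fps_def)
  next
    case (Suc m)
    have sign: "(-1) ^ m * (-1) ^ (i - 1) = - ((-1) ^ (m - i) :: 'a)" if "1 \<le> i" "i \<le> m" for i
    proof -
      have "m + (i - 1) = Suc ((m - i) + 2 * (i - 1))" using that by auto
      then have "(-1::'a) ^ (m + (i - 1)) = - ((-1) ^ (m - i))"
        by (simp only: power_Suc power_add power_mult) simp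
      then show ?thesis by (simp only: power_add)
    qed
    have "fps_nth (esym_fps P * psum_fps P) n
        = ?e 0 * fps_nth (psum_fps P) (Suc m) + (\<Sum>j=1..m. ?e j * fps_nth (psum_fps P) (Suc m - j))"
      by (simp add: fps_mult_nth Suc esym_fps_def psum_fps_def sum.atLeast_Suc_atMost)
    also have "\<dots> = (-1) ^ m * ?p (Suc m) + (\<Sum>j=1..m. (-1) ^ (m - j) * ?e j * ?p (Suc m - j))"
      by (auto simp: psum_fps_def esym_def Suc_diff_le intro!: sum.cong)
    also have "(-1) ^ m * ?p (Suc m)
        = (\<Sum>i=1..m. ((-1) ^ m * (-1) ^ (i - 1)) * ?e i * ?p (Suc m - i))
          + ((-1) ^ m * (-1) ^ m) * of_nat (Suc m) * ?e (Suc m)"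
      by (simp add: psum_Suc sum_distrib_left algebra_simps)
    also have "\<dots> = - (\<Sum>i=1..m. (-1) ^ (m - i) * ?e i * ?p (Suc m - i)) + of_nat (Suc m) * ?e (Suc m)"
    proof -
      have "(\<Sum>i=1..m. ((-1) ^ m * (-1) ^ (i - 1)) * ?e i * ?p (Suc m - i))
          = (\<Sum>i=1..m. - ((-1) ^ (m - i) * ?e i * ?p (Suc m - i)))"
        by (intro sum.cong refl) (metis atLeastAtMost_iff sign mult_minus_left)
      moreover have "(-1::'a) ^ m * (-1) ^ m = 1" by (simp flip: power_add)
      ultimately show ?thesis by (simp add: sum_negf)
    qed
    finally show ?thesis by (simp add: Suc esym_fps_def)
  qed
qed

lemma esym_fps_quotient:
  obtains F where "esym_fps P = esym_fps Q * F" "fps_nth F 0 = 1"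
    "fps_euler F = F * (psum_fps P - psum_fps Q)"
proof
  define R where "R = fps_right_inverse (esym_fps Q) 1"
  have QR: "esym_fps Q * R = 1"
    unfolding R_def by (rule fps_right_inverse) (simp add: esym_fps_def esym_def)
  show "esym_fps P = esym_fps Q * (esym_fps P * R)"
    by (metis QR mult.assoc mult.commute mult_1)
  show "fps_nth (esym_fps P * R) 0 = 1"
    by (simp add: R_def esym_fps_def esym_def)
  show "fps_euler (esym_fps P * R) = (esym_fps P * R) * (psum_fps P - psum_fps Q)"
    using fps_euler_esym_fps fps_euler_esym_fps QR by (rule fps_euler_ratio)
qed

definition fps_one_mod :: "'a::comm_ring_1 set \<Rightarrow> 'a fps \<Rightarrow> bool" where
  "fps_one_mod I F \<longleftrightarrow> fps_nth F 0 = 1 \<and> (\<forall>n\<ge>1. fps_nth F n \<in> I)"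

lemma fps_one_mod_mult:
  assumes id: "is_ideal I" and F: "fps_one_mod I F" and G: "fps_one_mod I G"
  shows "fps_one_mod I (F * G)"
proof -
  have "fps_nth F i * fps_nth G (n - i) \<in> I" if "n \<ge> 1" "i \<le> n" for n i
    using F G that
    by (cases "i = 0") (auto simp: fps_one_mod_def intro: is_ideal_mult_left[OF id] is_ideal_mult_right[OF id])
  then show ?thesis
    using F G by (auto simp: fps_one_mod_def fps_mult_nth intro!: is_ideal_sum[OF id])
qed

lemma fps_one_mod_prod:
  assumes "is_ideal I" "finite A" "\<And>i. i \<in> A \<Longrightarrow> fps_one_mod I (X i)"
  shows "fps_one_mod I (prod X A)"
  using assms(2,3)
proof (induction A rule: finite_induct)
  case empty then show ?case by (simp add: fps_one_mod_def is_ideal_zero[OF assms(1)])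
next
  case (insert a A) then show ?case by (simp add: fps_one_mod_mult[OF assms(1)])
qed

lemma mult_fps_one_mod_nth:
  assumes id: "is_ideal I" and F0: "fps_nth F 0 = 1" and F: "\<And>k. 1 \<le> k \<Longrightarrow> k \<le> n \<Longrightarrow> fps_nth F k \<in> I"
  shows "fps_nth (E * F) n - fps_nth E n \<in> I"
proof -
  have "fps_nth (E * F) n - fps_nth E n = fps_nth (E * (F - 1)) n"
    by (simp add: algebra_simps)
  also have "\<dots> = (\<Sum>i=0..n. fps_nth E i * fps_nth (F - 1) (n - i))"
    by (simp add: fps_mult_nth)
  also have "\<dots> \<in> I"
    using F0 F by (auto intro!: is_ideal_sum[OF id] is_ideal_mult_left[OF id] simp: is_ideal_zero[OF id])
  finally show ?thesis .
qed

section \<open>Divided-power exponentials\<close>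

text \<open>\<open>dp_exp I i b = exp (b t\<^sup>i) = \<Sum>\<^sub>k \<gamma>\<^sub>k(b) t\<^sup>i\<^sup>k\<close>.\<close>
definition dp_exp :: "'a set \<Rightarrow> nat \<Rightarrow> 'a \<Rightarrow> 'a::comm_ring_1 fps" where
  "dp_exp I i b = Abs_fps (\<lambda>m. if i dvd m then divided_power I (m div i) b else 0)"

context
  fixes p :: nat and I :: "'a::comm_ring_1 set"
  assumes pr: "prime p" and zp: "zp_algebra p TYPE('a)" and dp: "divided_power_ideal p I"
begin

lemma fps_one_mod_dp_exp:
  assumes b: "b \<in> I" and i: "i \<ge> 1"
  shows "fps_one_mod I (dp_exp I i b)"
proof -
  have "fps_nth (dp_exp I i b) n \<in> I" if "n \<ge> 1" for n
  proof (cases "i dvd n")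
    case True
    then have "n div i \<ge> 1" using that i by (auto elim!: dvdE)
    then show ?thesis using True divided_power_in_ideal[OF pr zp dp b] by (simp add: dp_exp_def)
  next
    case False
    then show ?thesis by (simp add: dp_exp_def is_ideal_zero[OF divided_power_ideal_is_ideal[OF dp]])
  qed
  then show ?thesis by (simp add: fps_one_mod_def dp_exp_def divided_power_def)
qed

lemma fps_euler_dp_exp:
  assumes tf: "torsion_free TYPE('a)" and b: "b \<in> I" and i: "i \<ge> 1"
  shows "fps_euler (dp_exp I i b) = dp_exp I i b * (fps_const (of_nat i * b) * fps_X ^ i)"
proof (rule fps_ext)
  fix m
  have rhs: "fps_nth (dp_exp I i b * (fps_const (of_nat i * b) * fps_X ^ i)) m
      = (if m < i then 0 else of_nat i * b * fps_nth (dp_exp I i b) (m - i))"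
  proof -
    have comm: "dp_exp I i b * (fps_const (of_nat i * b) * fps_X ^ i)
        = fps_X ^ i * (fps_const (of_nat i * b) * dp_exp I i b)"
      by (simp add: algebra_simps)
    show ?thesis by (subst comm) (simp add: fps_X_power_mult_nth)
  qed
  show "fps_nth (fps_euler (dp_exp I i b)) m
      = fps_nth (dp_exp I i b * (fps_const (of_nat i * b) * fps_X ^ i)) m"
  proof (cases "m < i")
    case True
    then have "m = 0 \<or> \<not> i dvd m" using dvd_imp_le by auto
    then show ?thesis using True rhs by (auto simp: dp_exp_def)
  next
    case False
    show ?thesis
    proof (cases "i dvd m")
      case True
      then obtain k where k: "m = i * k" by blast
      have k1: "k \<ge> 1" using k False i by (cases k) auto
      have "m - i = i * (k - 1)" using k k1 by (simp add: algebra_simps diff_mult_distrib2)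
      then have "i dvd (m - i)" "(m - i) div i = k - 1" using i by auto
      moreover have "of_nat m * divided_power I k b = of_nat i * (b * divided_power I (k - 1) b)"
        using of_nat_mult_divided_power[OF pr zp dp tf b k1] k by (simp add: mult.assoc)
      ultimately show ?thesis using True False k i rhs by (simp add: dp_exp_def mult.assoc)
    next
      case False
      then have "\<not> i dvd (m - i)" using \<open>\<not> m < i\<close>
        by (metis dvd_add_triv_right_iff le_add_diff_inverse2 not_less add.commute)
      then show ?thesis using False \<open>\<not> m < i\<close> rhs by (simp add: dp_exp_def)
    qed
  qed
qed

end

theorem proposition2p10:
  fixes p N :: nat and I :: "'a::comm_ring_1 set" and P Q :: "'a poly"
  assumes "prime p"
    and "zp_algebra p TYPE('a)"
    and "torsion_free TYPE('a)"
    and "divided_power_ideal p I"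
    and "lead_coeff P = 1" and "lead_coeff Q = 1"
    and "N \<ge> 1"
    and "\<forall>n. 1 \<le> n \<and> n \<le> N \<longrightarrow> psum P n - psum Q n \<in> nat_smul_set n I"
  shows "\<forall>n. 1 \<le> n \<and> n \<le> N \<longrightarrow> esym P n - esym Q n \<in> I"
proof -
  note pr = assms(1) and zp = assms(2) and tf = assms(3) and dp = assms(4)
  have id: "is_ideal I" using dp by (rule divided_power_ideal_is_ideal)
  have "\<forall>n\<in>{1..N}. \<exists>c\<in>I. fps_nth (psum_fps P - psum_fps Q) n = of_nat n * c"
  proof
    fix n assume n: "n \<in> {1..N}"
    then obtain a where "a \<in> I" "psum P n - psum Q n = of_nat n * a"
      using assms(8) by (auto simp: nat_smul_set_def)
    with n show "\<exists>c\<in>I. fps_nth (psum_fps P - psum_fps Q) n = of_nat n * c"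
      by (intro bexI[of _ "(-1) ^ (n - 1) * a"])
        (auto simp: psum_fps_def algebra_simps intro: is_ideal_mult_right[OF id])
  qed
  then obtain b where b: "\<And>n. n \<in> {1..N} \<Longrightarrow> b n \<in> I"
    and PQb: "\<And>n. n \<in> {1..N} \<Longrightarrow> fps_nth (psum_fps P - psum_fps Q) n = of_nat n * b n"
    by metis
  obtain F where PQF: "esym_fps P = esym_fps Q * F" and F0: "fps_nth F 0 = 1"
    and DF: "fps_euler F = F * (psum_fps P - psum_fps Q)"
    by (rule esym_fps_quotient)
  define T where "T = (\<Sum>i\<in>{1..N}. fps_const (of_nat i * b i) * fps_X ^ i :: 'a fps)"
  define G where "G = (\<Prod>i\<in>{1..N}. dp_exp I i (b i))"
  have DG: "fps_euler G = G * T"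
    unfolding G_def T_def by (rule fps_euler_prod) (auto intro!: fps_euler_dp_exp[OF pr zp dp tf] b)
  have G1: "fps_one_mod I G"
    unfolding G_def by (rule fps_one_mod_prod[OF id]) (auto intro!: fps_one_mod_dp_exp[OF pr zp dp] b)
  have ST: "fps_nth (psum_fps P - psum_fps Q) j = fps_nth T j" if "j \<le> N" for j
    using PQb[of j] that by (cases "j = 0") (simp_all add: T_def fps_nth_sum_monomials psum_fps_def)
  have FG: "fps_nth F n = fps_nth G n" if "n \<le> N" for n
    using fps_euler_solutions_agree[OF tf DF DG _ _ ST that] F0 G1
    by (simp add: fps_one_mod_def T_def fps_nth_sum_monomials)
  show ?thesis
  proof (intro allI impI)
    fix n assume n: "1 \<le> n \<and> n \<le> N"
    have "fps_nth (esym_fps Q * F) n - fps_nth (esym_fps Q) n \<in> I"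
      by (rule mult_fps_one_mod_nth[OF id F0]) (use FG G1 n in \<open>auto simp: fps_one_mod_def\<close>)
    then show "esym P n - esym Q n \<in> I" by (simp only: flip: PQF) (simp add: esym_fps_def)
  qed
qed

end
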